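(* Let $m\ge1$, $N=2^m$. Then over $\mathbb{F}_2$: (i) $\boldsymbol{G}_N=\boldsymbol{G}_N^{-1}$; (ii) $\mathbf{Q}_{\pi}\boldsymbol{G}_N=(\boldsymbol{G}_N\mathbf{Q}_{\pi})^{-1}$; (iii) $(\boldsymbol{G}_N\mathbf{Q}_{\pi})^2=\mathbf{Q}_{\pi}\boldsymbol{G}_N$; (iv) $\boldsymbol{G}_N\mathbf{Q}_{\pi}\boldsymbol{G}_N=\mathbf{Q}_{\pi}\boldsymbol{G}_N\mathbf{Q}_{\pi}$.
   Context: $\boldsymbol{G}_N=\begin{pmatrix}1&0\\1&1\end{pmatrix}^{\otimes m}$ over $\mathbb{F}_2$ (Kronecker power), indices $0,\dots,N-1$. $\mathbf{Q}_{\pi}$ is the $N\times N$ permutation matrix of the permutation of $[0,N-1]$ swapping $i$ and $N-1-i$ for all $i$. *)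

theory Defs
  imports "Jordan_Normal_Form.Gauss_Jordan_Elimination" "HOL-Library.Z2"
begin

text \<open>Matrices over GF(2) are JNF matrices over the field type bit (HOL-Library.Z2).\<close>

definition kron_mat :: "'a :: times mat \<Rightarrow> 'a mat \<Rightarrow> 'a mat" where
  "kron_mat A B = mat (dim_row A * dim_row B) (dim_col A * dim_col B)
     (\<lambda>(i, j). A $$ (i div dim_row B, j div dim_col B) * B $$ (i mod dim_row B, j mod dim_col B))"

definition F2_kernel :: "bit mat" where
  "F2_kernel = mat 2 2 (\<lambda>(i, j). if j \<le> i then 1 else 0)"

fun polar_G :: "nat \<Rightarrow> bit mat" where
  "polar_G 0 = 1\<^sub>m 1"
| "polar_G (Suc m) = kron_mat F2_kernel (polar_G m)"

definition perm_mat :: "nat \<Rightarrow> (nat \<Rightarrow> nat) \<Rightarrow> bit mat" where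
  "perm_mat n \<pi> = mat n n (\<lambda>(i, j). if j = \<pi> i then 1 else 0)"

definition Q_rev :: "nat \<Rightarrow> bit mat" where
  "Q_rev n = perm_mat n (\<lambda>i. n - 1 - i)"

end

theory Submission
  imports Defs
begin

text \<open>\<open>G\<^sub>N\<close> and \<open>Q\<^sub>\<pi>\<close> are involutions, which gives (i) and (ii); (iii) follows from (iv)
  as \<open>(G Q)(G Q) = (G Q G) Q = Q G Q Q = Q G\<close>. The braid relation (iv) holds for the 2x2
  kernel by computation and is inherited by Kronecker powers, because \<open>Q\<^sub>\<pi>\<close> of size \<open>2n\<close> is
  the Kronecker product of \<open>Q\<^sub>\<pi>\<close> of sizes 2 and \<open>n\<close>, and \<open>(A \<otimes> B)(C \<otimes> D) = AC \<otimes> BD\<close>.\<close>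

lemma sum_nat_div_mod:
  fixes f :: "nat \<Rightarrow> nat \<Rightarrow> 'a::comm_monoid_add"
  shows "(\<Sum>k<b * q. f (k div q) (k mod q)) = (\<Sum>x<b. \<Sum>y<q. f x y)"
proof -
  have "(\<Sum>k<b * q. f (k div q) (k mod q)) = (\<Sum>x<b. \<Sum>k\<in>{x*q..<x*q+q}. f (k div q) (k mod q))"
    by (rule sum.nat_group[symmetric])
  also have "\<dots> = (\<Sum>x<b. \<Sum>y<q. f x y)"
  proof (rule sum.cong[OF refl])
    fix x
    have "(\<Sum>k\<in>{x*q..<x*q+q}. f (k div q) (k mod q))
        = (\<Sum>y\<in>{0..<q}. f ((y + x*q) div q) ((y + x*q) mod q))"
      by (subst sum.shift_bounds_nat_ivl[symmetric]) (simp add: add.commute)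
    also have "\<dots> = (\<Sum>y<q. f x y)"
      by (auto simp: atLeast0LessThan intro: sum.cong)
    finally show "(\<Sum>k\<in>{x*q..<x*q+q}. f (k div q) (k mod q)) = (\<Sum>y<q. f x y)" .
  qed
  finally show ?thesis .
qed

lemma kron_mat_carrier:
  "A \<in> carrier_mat a b \<Longrightarrow> B \<in> carrier_mat p q \<Longrightarrow> kron_mat A B \<in> carrier_mat (a * p) (b * q)"
  by (simp add: kron_mat_def)

lemma kron_mat_mult:
  fixes A :: "'a::comm_semiring_0 mat"
  assumes A: "A \<in> carrier_mat a b" and C: "C \<in> carrier_mat b c"
    and B: "B \<in> carrier_mat p q" and D: "D \<in> carrier_mat q r"
  shows "kron_mat A B * kron_mat C D = kron_mat (A * C) (B * D)"
proof (rule eq_matI)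
  fix i j assume "i < dim_row (kron_mat (A * C) (B * D))" "j < dim_col (kron_mat (A * C) (B * D))"
  then have i: "i < a * p" and j: "j < c * r" using A B C D by (auto simp: kron_mat_def)
  then have "p > 0" "r > 0" by (metis gr0I mult_0_right not_less_zero)+
  then have blocks: "i div p < a" "i mod p < p" "j div r < c" "j mod r < r"
    using i j by (auto simp: less_mult_imp_div_less mult.commute)
  have "(kron_mat A B * kron_mat C D) $$ (i, j)
      = (\<Sum>k<b * q. (A $$ (i div p, k div q) * C $$ (k div q, j div r))
                   * (B $$ (i mod p, k mod q) * D $$ (k mod q, j mod r)))"
    using A B C D i j by (simp add: kron_mat_def scalar_prod_def atLeast0LessThan ac_simps)
  also have "\<dots> = (\<Sum>x<b. \<Sum>y<q. (A $$ (i div p, x) * C $$ (x, j div r))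
                                * (B $$ (i mod p, y) * D $$ (y, j mod r)))"
    by (rule sum_nat_div_mod)
  also have "\<dots> = (\<Sum>x<b. A $$ (i div p, x) * C $$ (x, j div r))
                * (\<Sum>y<q. B $$ (i mod p, y) * D $$ (y, j mod r))"
    by (rule sum_product[symmetric])
  also have "\<dots> = kron_mat (A * C) (B * D) $$ (i, j)"
    using A B C D i j blocks by (simp add: kron_mat_def scalar_prod_def atLeast0LessThan)
  finally show "(kron_mat A B * kron_mat C D) $$ (i, j) = kron_mat (A * C) (B * D) $$ (i, j)" .
qed (use A B C D in \<open>simp_all add: kron_mat_def\<close>)

lemma kron_mat_mult3:
  fixes A :: "'a::comm_semiring_0 mat"
  assumes "A \<in> carrier_mat a a" "B \<in> carrier_mat a a" "C \<in> carrier_mat a a"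
    and "D \<in> carrier_mat p p" "E \<in> carrier_mat p p" "F \<in> carrier_mat p p"
  shows "kron_mat A D * kron_mat B E * kron_mat C F = kron_mat (A * B * C) (D * E * F)"
  using assms by (simp add: kron_mat_mult[of _ a a _ a _ p p _ p] mult_carrier_mat[of _ a a _ a])

lemma kron_mat_one: "kron_mat (1\<^sub>m a) (1\<^sub>m b :: 'a::semiring_1 mat) = 1\<^sub>m (a * b)"
proof (rule eq_matI)
  fix i j assume "i < dim_row (1\<^sub>m (a * b) :: 'a mat)" "j < dim_col (1\<^sub>m (a * b) :: 'a mat)"
  then have i: "i < a * b" and j: "j < a * b" by auto
  then have "b > 0" by (metis gr0I mult_0_right not_less_zero)
  moreover have "i div b < a" "j div b < a" using i j by (auto simp: less_mult_imp_div_less)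
  moreover have "(i div b = j div b \<and> i mod b = j mod b) = (i = j)"
    by (metis div_mult_mod_eq)
  ultimately show "kron_mat (1\<^sub>m a) (1\<^sub>m b) $$ (i, j) = (1\<^sub>m (a * b) :: 'a mat) $$ (i, j)"
    using i j by (auto simp: kron_mat_def)
qed (simp_all add: kron_mat_def)

lemma perm_mat_mult:
  assumes "\<And>i. i < n \<Longrightarrow> \<pi> i < n"
  shows "perm_mat n \<pi> * perm_mat n \<sigma> = perm_mat n (\<sigma> \<circ> \<pi>)"
proof (rule eq_matI)
  fix i j assume "i < dim_row (perm_mat n (\<sigma> \<circ> \<pi>))" "j < dim_col (perm_mat n (\<sigma> \<circ> \<pi>))"
  then have "i < n" "j < n" by (auto simp: perm_mat_def)
  then show "(perm_mat n \<pi> * perm_mat n \<sigma>) $$ (i, j) = perm_mat n (\<sigma> \<circ> \<pi>) $$ (i, j)"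
    using assms by (simp add: perm_mat_def scalar_prod_def if_distrib[of "\<lambda>x. x * _"] sum.delta')
qed (simp_all add: perm_mat_def)

lemma perm_mat_eq_one: "(\<And>i. i < n \<Longrightarrow> \<pi> i = i) \<Longrightarrow> perm_mat n \<pi> = 1\<^sub>m n"
  by (rule eq_matI) (auto simp: perm_mat_def)

lemma Q_rev_carrier: "Q_rev n \<in> carrier_mat n n"
  by (simp add: Q_rev_def perm_mat_def)

lemma Q_rev_squared: "Q_rev n * Q_rev n = 1\<^sub>m n"
proof -
  have "Q_rev n * Q_rev n = perm_mat n ((\<lambda>i. n - 1 - i) \<circ> (\<lambda>i. n - 1 - i))"
    unfolding Q_rev_def by (rule perm_mat_mult) auto
  also have "\<dots> = 1\<^sub>m n"
    by (rule perm_mat_eq_one) auto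
  finally show ?thesis .
qed

lemma Q_rev_one: "Q_rev 1 = 1\<^sub>m 1"
  unfolding Q_rev_def by (rule perm_mat_eq_one) simp

lemma Q_rev_double: "Q_rev (2 * n) = kron_mat (Q_rev 2) (Q_rev n)"
proof (rule eq_matI)
  fix i j assume "i < dim_row (kron_mat (Q_rev 2) (Q_rev n))" "j < dim_col (kron_mat (Q_rev 2) (Q_rev n))"
  then have i: "i < 2 * n" and j: "j < 2 * n" by (auto simp: kron_mat_def Q_rev_def perm_mat_def)
  have "(j = 2 * n - 1 - i) = (j div n = 1 - i div n \<and> j mod n = n - 1 - i mod n)"
    using i j by (cases "i < n"; cases "j < n") (auto simp: div_if mod_if)
  then show "Q_rev (2 * n) $$ (i, j) = kron_mat (Q_rev 2) (Q_rev n) $$ (i, j)"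
    using i j by (auto simp: kron_mat_def Q_rev_def perm_mat_def less_mult_imp_div_less mult.commute)
qed (simp_all add: kron_mat_def Q_rev_def perm_mat_def)

lemma F2_kernel_carrier: "F2_kernel \<in> carrier_mat 2 2"
  by (simp add: F2_kernel_def)

lemma sum_upto_2: "(\<Sum>i\<in>{0..<2::nat}. f i) = f 0 + f 1"
  by (simp add: numeral_2_eq_2)

lemma F2_kernel_squared: "F2_kernel * F2_kernel = 1\<^sub>m 2"
  by (rule eq_matI) (auto simp: F2_kernel_def less_2_cases_iff, simp_all add: scalar_prod_def sum_upto_2)

lemma F2_kernel_Q_rev_braid: "F2_kernel * Q_rev 2 * F2_kernel = Q_rev 2 * F2_kernel * Q_rev 2"
  by (rule eq_matI)
    (auto simp: F2_kernel_def Q_rev_def perm_mat_def less_2_cases_iff, simp_all add: scalar_prod_def sum_upto_2)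

lemma polar_G_carrier: "polar_G m \<in> carrier_mat (2 ^ m) (2 ^ m)"
  by (induction m) (simp_all add: kron_mat_carrier F2_kernel_carrier)

lemma polar_G_squared: "polar_G m * polar_G m = 1\<^sub>m (2 ^ m)"
proof (induction m)
  case (Suc m)
  have "polar_G (Suc m) * polar_G (Suc m) = kron_mat (F2_kernel * F2_kernel) (polar_G m * polar_G m)"
    by (simp add: kron_mat_mult[OF F2_kernel_carrier F2_kernel_carrier polar_G_carrier polar_G_carrier])
  then show ?case
    by (simp add: F2_kernel_squared Suc.IH kron_mat_one)
qed simp

lemma polar_G_Q_rev_braid:
  "polar_G m * Q_rev (2 ^ m) * polar_G m = Q_rev (2 ^ m) * polar_G m * Q_rev (2 ^ m)"
proof (induction m)
  case 0
  show ?case using Q_rev_one by simp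
next
  case (Suc m)
  let ?G = "polar_G m" and ?Q = "Q_rev (2 ^ m)" and ?F = F2_kernel and ?P = "Q_rev 2"
  have F: "?F \<in> carrier_mat 2 2" and P: "?P \<in> carrier_mat 2 2"
    and G: "?G \<in> carrier_mat (2 ^ m) (2 ^ m)" and Q: "?Q \<in> carrier_mat (2 ^ m) (2 ^ m)"
    by (simp_all add: F2_kernel_carrier Q_rev_carrier polar_G_carrier)
  have G_Suc: "polar_G (Suc m) = kron_mat ?F ?G" and Q_Suc: "Q_rev (2 ^ Suc m) = kron_mat ?P ?Q"
    by (simp_all add: Q_rev_double)
  have "polar_G (Suc m) * Q_rev (2 ^ Suc m) * polar_G (Suc m) = kron_mat (?F * ?P * ?F) (?G * ?Q * ?G)"
    unfolding G_Suc Q_Suc using F P F G Q G by (rule kron_mat_mult3)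
  also have "\<dots> = kron_mat (?P * ?F * ?P) (?Q * ?G * ?Q)"
    by (simp add: F2_kernel_Q_rev_braid Suc.IH)
  also have "\<dots> = Q_rev (2 ^ Suc m) * polar_G (Suc m) * Q_rev (2 ^ Suc m)"
    unfolding G_Suc Q_Suc using P F P Q G Q by (rule kron_mat_mult3[symmetric])
  finally show ?case .
qed

lemma mat_inverse_eqI:
  fixes A :: "'a::field mat"
  assumes A: "A \<in> carrier_mat n n" and B: "B \<in> carrier_mat n n"
    and AB: "A * B = 1\<^sub>m n" and BA: "B * A = 1\<^sub>m n"
  shows "mat_inverse A = Some B"
proof (cases "mat_inverse A")
  case None
  have "A \<in> Units (ring_mat TYPE('a) n undefined)"
    using A B AB BA by (auto simp: Units_def ring_mat_def)
  with mat_inverse(1)[OF A None, of undefined] show ?thesis by blast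
next
  case (Some C)
  with mat_inverse(2)[OF A] have CA: "C * A = 1\<^sub>m n" and C: "C \<in> carrier_mat n n" by auto
  have "C = C * A * B"
    using A B C AB by (simp add: assoc_mult_mat[of C n n A n B n])
  with CA B Some show ?thesis by simp
qed

lemma mat_inverse_mult_involutions:
  fixes A :: "'a::field mat"
  assumes A: "A \<in> carrier_mat n n" and B: "B \<in> carrier_mat n n"
    and AA: "A * A = 1\<^sub>m n" and BB: "B * B = 1\<^sub>m n"
  shows "mat_inverse (A * B) = Some (B * A)"
proof (rule mat_inverse_eqI)
  have "A * B * (B * A) = A * (B * B) * A" and "B * A * (A * B) = B * (A * A) * B"
    using A B by (simp_all add: assoc_mult_mat[of _ n n _ n _ n])
  then show "A * B * (B * A) = 1\<^sub>m n" and "B * A * (A * B) = 1\<^sub>m n"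
    using A B by (simp_all add: AA BB)
qed (use A B in auto)

lemma square_mult_braided_involution:
  fixes A :: "'a::semiring_1 mat"
  assumes A: "A \<in> carrier_mat n n" and B: "B \<in> carrier_mat n n"
    and BB: "B * B = 1\<^sub>m n" and braid: "A * B * A = B * A * B"
  shows "A * B * (A * B) = B * A"
proof -
  have "A * B * (A * B) = A * B * A * B"
    using A B by (simp add: assoc_mult_mat[of _ n n _ n _ n])
  also have "\<dots> = B * A * (B * B)"
    using A B by (simp add: braid assoc_mult_mat[of _ n n _ n _ n])
  finally show ?thesis
    using A B by (simp add: BB)
qed

theorem lemma2:
  fixes m :: nat
  assumes "m \<ge> 1"
  defines "N \<equiv> 2 ^ m"
  shows "mat_inverse (polar_G m) = Some (polar_G m)
    \<and> mat_inverse (polar_G m * Q_rev N) = Some (Q_rev N * polar_G m)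
    \<and> (polar_G m * Q_rev N) * (polar_G m * Q_rev N) = Q_rev N * polar_G m
    \<and> polar_G m * Q_rev N * polar_G m = Q_rev N * polar_G m * Q_rev N"
proof -
  have G: "polar_G m \<in> carrier_mat N N" and Q: "Q_rev N \<in> carrier_mat N N"
    unfolding N_def by (rule polar_G_carrier, rule Q_rev_carrier)
  have GG: "polar_G m * polar_G m = 1\<^sub>m N" and QQ: "Q_rev N * Q_rev N = 1\<^sub>m N"
    unfolding N_def by (rule polar_G_squared, rule Q_rev_squared)
  have braid: "polar_G m * Q_rev N * polar_G m = Q_rev N * polar_G m * Q_rev N"
    unfolding N_def by (rule polar_G_Q_rev_braid)
  show ?thesis
    using mat_inverse_eqI[OF G G GG GG] mat_inverse_mult_involutions[OF G Q GG QQ]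
      square_mult_braided_involution[OF G Q QQ braid] braid
    by blast
qed

end
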